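(* Let $G$ be a finite group with $|G|\ge3$, let $k,\ell\in\mathbb N$ with $k<\ell$, and let $U_1,\ldots,U_k,V_1,\ldots,V_\ell\in\mathcal A(G)$ with $U_1\boldsymbol{\cdot}\ldots\boldsymbol{\cdot}U_k=V_1\boldsymbol{\cdot}\ldots\boldsymbol{\cdot}V_\ell$. Then there exist $\mu\in[1,k]$, $\lambda,\lambda'\in[1,\ell]$ with $\lambda\ne\lambda'$, and $g_1,g_2\in G$ such that $U_\mu=g_1\boldsymbol{\cdot}g_2\boldsymbol{\cdot}\ldots\boldsymbol{\cdot}g_m$ with $m\ge2$ and $g_1g_2\cdots g_m=1_G$, and $g_1\mid V_\lambda$ and $g_2\mid V_{\lambda'}$ in $\mathcal F(G)$.
   Context: Let $G$ be a finite group written multiplicatively with identity $1_G$. $\mathcal F(G)$ is the free abelian monoid with basis $G$; its elements are sequences $S=g_1\boldsymbol{\cdot}\ldots\boldsymbol{\cdot}g_\ell$ (unordered, repetitions allowed, operation $\boldsymbol{\cdot}$ = concatenation). $\pi(S)=\{g_{\tau(1)}\cdots g_{\tau(\ell)}:\tau\text{ a permutation of }[1,\ell]\}$, $\mathcal B(G)=\{S\in\mathcal F(G):1_G\in\pi(S)\}$, and $\mathcal A(G)$ is the set of atoms (irreducible elements) of the monoid $\mathcal B(G)$. *)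

theory Defs
  imports "HOL-Algebra.Group" "HOL-Library.Multiset"
begin

definition list_prod :: "('a, 'b) monoid_scheme \<Rightarrow> 'a list \<Rightarrow> 'a" where
  "list_prod G xs = foldr (\<lambda>x y. x \<otimes>\<^bsub>G\<^esub> y) xs \<one>\<^bsub>G\<^esub>"

definition seqs :: "('a, 'b) monoid_scheme \<Rightarrow> 'a multiset set" where
  "seqs G = {S. set_mset S \<subseteq> carrier G}"

definition seq_pi :: "('a, 'b) monoid_scheme \<Rightarrow> 'a multiset \<Rightarrow> 'a set" where
  "seq_pi G S = {list_prod G xs | xs. mset xs = S}"

definition prod_one_seqs :: "('a, 'b) monoid_scheme \<Rightarrow> 'a multiset set" where
  "prod_one_seqs G = {S \<in> seqs G. \<one>\<^bsub>G\<^esub> \<in> seq_pi G S}"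

text \<open>A(G): atoms of the monoid B(G), i.e. non-units (the only unit is the empty
  sequence) that are not a product of two non-units of B(G).\<close>
definition atoms :: "('a, 'b) monoid_scheme \<Rightarrow> 'a multiset set" where
  "atoms G = {S \<in> prod_one_seqs G. S \<noteq> {#} \<and>
     (\<forall>A\<in>prod_one_seqs G. \<forall>B\<in>prod_one_seqs G. S = A + B \<longrightarrow> A = {#} \<or> B = {#})}"

end

theory Submission
  imports Defs
begin

text \<open>Suppose no atom \<open>U\<^sub>\<mu>\<close> admits a product-one ordering whose first two terms lie in
  different \<open>V\<^sub>\<lambda>\<close>. Product-one orderings are closed under rotation, so any two cyclically
  consecutive terms of such an ordering lie in the same blocks; hence every atom
  \<open>U\<^sub>\<mu> \<noteq> 1\<^sub>G\<close> lies inside a single block \<open>V\<^sub>\<lambda>\<close>. The atoms equal to \<open>1\<^sub>G\<close> occur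
  equally often on both sides, and every other \<open>V\<^sub>\<lambda>\<close> has a term \<open>\<noteq> 1\<^sub>G\<close>, which lies in
  some \<open>U\<^sub>\<mu> \<noteq> 1\<^sub>G\<close>. So \<open>\<mu> \<mapsto> \<lambda>\<close> maps the nontrivial \<open>U\<close>'s onto the nontrivial \<open>V\<close>'s,
  giving \<open>\<ell> \<le> k\<close>.\<close>

lemma list_prod_Nil [simp]: "list_prod G [] = \<one>\<^bsub>G\<^esub>"
  by (simp add: list_prod_def)

lemma list_prod_Cons [simp]: "list_prod G (x # xs) = x \<otimes>\<^bsub>G\<^esub> list_prod G xs"
  by (simp add: list_prod_def)

lemma mset_rotate [simp]: "mset (rotate n xs) = mset xs"
  by (metis append_take_drop_id mset_append rotate_drop_take union_commute)

lemma prod_one_seqsI: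
  "mset xs = S \<Longrightarrow> list_prod G xs = \<one>\<^bsub>G\<^esub> \<Longrightarrow> set xs \<subseteq> carrier G \<Longrightarrow> S \<in> prod_one_seqs G"
  unfolding prod_one_seqs_def seqs_def seq_pi_def by force

lemma atomE:
  assumes "A \<in> atoms G"
  obtains xs where "mset xs = A" "list_prod G xs = \<one>\<^bsub>G\<^esub>" "set xs \<subseteq> carrier G"
  using assms unfolding atoms_def prod_one_seqs_def seqs_def seq_pi_def by auto

lemma cyclic_chain_constant:
  assumes "0 < m" and nonempty: "\<And>i. i < m \<Longrightarrow> S i \<noteq> {}"
    and step: "\<And>i a b. i < m \<Longrightarrow> a \<in> S i \<Longrightarrow> b \<in> S (Suc i mod m) \<Longrightarrow> a = b"
  obtains c where "\<And>i. i < m \<Longrightarrow> S i = {c}"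
proof -
  obtain c where c: "c \<in> S 0" using nonempty assms(1) by blast
  have all_c: "\<forall>a\<in>S i. a = c" if "i < m" for i
    using that
  proof (induction i)
    case 0
    have "S (Suc 0 mod m) \<noteq> {}" using assms(1) by (intro nonempty mod_less_divisor)
    then obtain b where b: "b \<in> S (Suc 0 mod m)" by blast
    show ?case using step[OF 0 _ b] step[OF 0 c b] by blast
  next
    case (Suc i)
    then have "i < m" "Suc i mod m = Suc i" by simp_all
    with Suc.IH nonempty[of i] show ?case using step[of i] by (metis all_not_in_conv)
  qed
  show thesis
  proof (rule that)
    fix i assume "i < m"
    then show "S i = {c}" using all_c[OF \<open>i < m\<close>] nonempty[OF \<open>i < m\<close>] by auto
  qed
qed

context group
begin

lemma list_prod_closed: "set xs \<subseteq> carrier G \<Longrightarrow> list_prod G xs \<in> carrier G"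
  by (induction xs) auto

lemma list_prod_append:
  "set xs \<subseteq> carrier G \<Longrightarrow> set ys \<subseteq> carrier G \<Longrightarrow>
    list_prod G (xs @ ys) = list_prod G xs \<otimes> list_prod G ys"
  by (induction xs) (auto simp: list_prod_closed m_assoc)

lemma list_prod_rotate:
  assumes "set xs \<subseteq> carrier G" and "list_prod G xs = \<one>"
  shows "list_prod G (rotate n xs) = \<one>"
proof -
  let ?t = "take (n mod length xs) xs" and ?d = "drop (n mod length xs) xs"
  have t: "set ?t \<subseteq> carrier G" and d: "set ?d \<subseteq> carrier G"
    using assms(1) by (meson order_trans set_take_subset set_drop_subset)+
  have "list_prod G (?t @ ?d) = \<one>"
    using assms(2) by simp
  then have "list_prod G ?t \<otimes> list_prod G ?d = \<one>"
    by (simp only: list_prod_append[OF t d])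
  then have "list_prod G ?d \<otimes> list_prod G ?t = \<one>"
    by (rule inv_comm) (use t d list_prod_closed in auto)
  then show ?thesis
    by (simp add: rotate_drop_take list_prod_append[OF d t])
qed

lemma list_prod_remove1_one:
  "set xs \<subseteq> carrier G \<Longrightarrow> list_prod G (remove1 \<one> xs) = list_prod G xs"
  by (induction xs) (auto simp: list_prod_closed)

lemma one_in_prod_one_seqs: "{#\<one>#} \<in> prod_one_seqs G"
  by (rule prod_one_seqsI[of "[\<one>]"]) auto

lemma atom_with_one:
  assumes A: "A \<in> atoms G" and "\<one> \<in># A"
  shows "A = {#\<one>#}"
proof -
  obtain xs where xs: "mset xs = A" "list_prod G xs = \<one>" "set xs \<subseteq> carrier G"
    using A by (rule atomE)
  have split: "A = {#\<one>#} + (A - {#\<one>#})"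
    using \<open>\<one> \<in># A\<close> by simp
  have rest: "A - {#\<one>#} \<in> prod_one_seqs G"
  proof (rule prod_one_seqsI)
    show "mset (remove1 \<one> xs) = A - {#\<one>#}" using xs(1) by simp
    show "list_prod G (remove1 \<one> xs) = \<one>" using xs(2,3) list_prod_remove1_one by simp
    show "set (remove1 \<one> xs) \<subseteq> carrier G" using xs(3) set_remove1_subset by fastforce
  qed
  have "\<forall>X\<in>prod_one_seqs G. \<forall>Y\<in>prod_one_seqs G. A = X + Y \<longrightarrow> X = {#} \<or> Y = {#}"
    using A unfolding atoms_def by blast
  then have "{#\<one>#} = {#} \<or> A - {#\<one>#} = {#}"
    using one_in_prod_one_seqs rest split by blast
  then show ?thesis using split by simp
qed

lemma count_one_atom:
  assumes "A \<in> atoms G"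
  shows "count A \<one> = (if A = {#\<one>#} then 1 else 0)"
proof (cases "\<one> \<in># A")
  case True
  then show ?thesis using atom_with_one[OF assms] by simp
next
  case False
  then show ?thesis by (auto simp: not_in_iff)
qed

lemma count_one_sum_atoms:
  assumes "finite I" and "\<forall>i\<in>I. W i \<in> atoms G"
  shows "count (\<Sum>i\<in>I. W i) \<one> = card {i\<in>I. W i = {#\<one>#}}"
proof -
  have "count (\<Sum>i\<in>I. W i) \<one> = (\<Sum>i\<in>I. if W i = {#\<one>#} then 1 else 0)"
    unfolding count_sum using assms(2) count_one_atom by (intro sum.cong) auto
  then show ?thesis
    using sum.inter_filter[OF assms(1), of "\<lambda>_. 1::nat"] by simp
qed

lemma atom_size_ge_2:
  assumes A: "A \<in> atoms G" and "A \<noteq> {#\<one>#}"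
  shows "2 \<le> size A"
proof -
  obtain xs where xs: "mset xs = A" "list_prod G xs = \<one>" "set xs \<subseteq> carrier G"
    using A by (rule atomE)
  have "xs \<noteq> []" using A xs(1) unfolding atoms_def by auto
  moreover have "length xs \<noteq> 1"
  proof
    assume "length xs = 1"
    then obtain x where "xs = [x]" by (auto simp: length_Suc_conv)
    with xs assms(2) show False by auto
  qed
  ultimately have "2 \<le> length xs" by (cases "length xs") auto
  then show ?thesis using xs(1) by auto
qed

text \<open>Rotating a product-one ordering brings any two cyclically consecutive terms to the
  front, so the hypothesis forces consecutive terms into the same blocks.\<close>

lemma atom_within_one_block:
  assumes A: "A \<in> atoms G" and "A \<noteq> {#\<one>#}"
    and cover: "\<forall>x\<in>#A. \<exists>j\<in>J. x \<in># V j"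
    and no_split: "\<And>gs a b. 2 \<le> length gs \<Longrightarrow> mset gs = A \<Longrightarrow> list_prod G gs = \<one> \<Longrightarrow>
        a \<in> J \<Longrightarrow> b \<in> J \<Longrightarrow> gs ! 0 \<in># V a \<Longrightarrow> gs ! 1 \<in># V b \<Longrightarrow> a = b"
  shows "\<exists>c\<in>J. \<forall>x\<in>#A. \<forall>j\<in>J. x \<in># V j \<longrightarrow> j = c"
proof -
  obtain xs where xs: "mset xs = A" "list_prod G xs = \<one>" "set xs \<subseteq> carrier G"
    using A by (rule atomE)
  let ?m = "length xs"
  define S where "S i = {j\<in>J. xs ! i \<in># V j}" for i
  have m: "2 \<le> ?m" using atom_size_ge_2[OF assms(1,2)] xs(1) by auto
  then have pos: "0 < ?m" "1 < ?m" by linarith+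
  have nonempty: "S i \<noteq> {}" if "i < ?m" for i
  proof -
    have "xs ! i \<in># A" using that xs(1) nth_mem by fastforce
    with cover show ?thesis unfolding S_def by blast
  qed
  have step: "a = b" if "i < ?m" "a \<in> S i" "b \<in> S (Suc i mod ?m)" for i a b
  proof -
    have "rotate i xs ! 0 = xs ! i" "rotate i xs ! 1 = xs ! (Suc i mod ?m)"
      using nth_rotate[OF pos(1), of i] nth_rotate[OF pos(2), of i] that(1) by simp_all
    moreover have "a \<in> J" "xs ! i \<in># V a" "b \<in> J" "xs ! (Suc i mod ?m) \<in># V b"
      using that(2,3) unfolding S_def by auto
    moreover have "mset (rotate i xs) = A" "list_prod G (rotate i xs) = \<one>"
      using xs list_prod_rotate by auto
    ultimately show ?thesis using no_split[of "rotate i xs" a b] m by simp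
  qed
  obtain c where c: "\<And>i. i < ?m \<Longrightarrow> S i = {c}"
  proof (rule cyclic_chain_constant[of ?m S])
    show "0 < ?m" by (rule pos)
  qed (use nonempty step that in blast)+
  show ?thesis
  proof (intro bexI ballI impI)
    show "c \<in> J" using c[OF pos(1)] unfolding S_def by blast
    fix x j assume "x \<in># A" "j \<in> J" "x \<in># V j"
    moreover have "x \<in> set xs" using \<open>x \<in># A\<close> xs(1) by auto
    then obtain i where "i < ?m" "xs ! i = x" by (auto simp: in_set_conv_nth)
    ultimately have "j \<in> S i" unfolding S_def by simp
    then show "j = c" using c[OF \<open>i < ?m\<close>] by blast
  qed
qed

lemma card_le_if_atoms_within_blocks:
  assumes "finite I" "finite J"
    and U: "\<forall>i\<in>I. U i \<in> atoms G" and V: "\<forall>j\<in>J. V j \<in> atoms G"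
    and eq: "(\<Sum>i\<in>I. U i) = (\<Sum>j\<in>J. V j)"
    and block: "\<forall>i\<in>I. U i \<noteq> {#\<one>#} \<longrightarrow> (\<exists>c\<in>J. \<forall>x\<in>#U i. \<forall>j\<in>J. x \<in># V j \<longrightarrow> j = c)"
  shows "card J \<le> card I"
proof -
  define I1 where "I1 = {i\<in>I. U i = {#\<one>#}}"
  define J1 where "J1 = {j\<in>J. V j = {#\<one>#}}"
  have "\<forall>i\<in>I - I1. \<exists>c. \<forall>x\<in>#U i. \<forall>j\<in>J. x \<in># V j \<longrightarrow> j = c"
    using block unfolding I1_def by blast
  then obtain f where f: "\<forall>i\<in>I - I1. \<forall>x\<in>#U i. \<forall>j\<in>J. x \<in># V j \<longrightarrow> j = f i"
    by (rule bchoice[THEN exE])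
  have "J - J1 \<subseteq> f ` (I - I1)"
  proof
    fix j assume j: "j \<in> J - J1"
    then have Vj: "V j \<in> atoms G" "V j \<noteq> {#\<one>#}" using V unfolding J1_def by auto
    then obtain x where x: "x \<in># V j" unfolding atoms_def by fastforce
    then have "x \<noteq> \<one>" using atom_with_one Vj by blast
    have "x \<in># (\<Sum>i\<in>I. U i)"
      using eq x j assms(2) by (auto simp: set_mset_sum)
    then obtain i where i: "i \<in> I" "x \<in># U i"
      using assms(1) by (auto simp: set_mset_sum)
    with \<open>x \<noteq> \<one>\<close> have "i \<in> I - I1" unfolding I1_def by auto
    with f i(2) j x have "j = f i" by blast
    with \<open>i \<in> I - I1\<close> show "j \<in> f ` (I - I1)" by blast
  qed
  then have "card (J - J1) \<le> card (I - I1)"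
    using assms(1) surj_card_le by blast
  moreover have "card J1 = card I1"
    using count_one_sum_atoms[OF assms(1) U] count_one_sum_atoms[OF assms(2) V] eq
    unfolding I1_def J1_def by simp
  moreover have "card (J - J1) = card J - card J1" "card J1 \<le> card J"
    using assms(2) unfolding J1_def by (simp_all add: card_Diff_subset card_mono)
  moreover have "card (I - I1) = card I - card I1" "card I1 \<le> card I"
    using assms(1) unfolding I1_def by (simp_all add: card_Diff_subset card_mono)
  ultimately show ?thesis by linarith
qed

end

theorem lemma5p1:
  fixes G (structure) and k l :: nat and U V :: "nat \<Rightarrow> 'a multiset"
  assumes "group G" and "finite (carrier G)" and "card (carrier G) \<ge> 3"
    and "k < l"
    and "\<forall>i\<in>{1..k}. U i \<in> atoms G"
    and "\<forall>j\<in>{1..l}. V j \<in> atoms G"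
    and "(\<Sum>i\<in>{1..k}. U i) = (\<Sum>j\<in>{1..l}. V j)"
  shows "\<exists>mu\<in>{1..k}. \<exists>lam1\<in>{1..l}. \<exists>lam2\<in>{1..l}. lam1 \<noteq> lam2 \<and>
           (\<exists>gs. length gs \<ge> 2 \<and> mset gs = U mu \<and> list_prod G gs = \<one>
                 \<and> gs ! 0 \<in># V lam1 \<and> gs ! 1 \<in># V lam2)"
proof (rule ccontr)
  assume no_split: "\<not> ?thesis"
  have "\<forall>mu\<in>{1..k}. U mu \<noteq> {#\<one>#} \<longrightarrow>
      (\<exists>c\<in>{1..l}. \<forall>x\<in>#U mu. \<forall>j\<in>{1..l}. x \<in># V j \<longrightarrow> j = c)"
  proof (intro ballI impI)
    fix mu assume mu: "mu \<in> {1..k}" "U mu \<noteq> {#\<one>#}"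
    show "\<exists>c\<in>{1..l}. \<forall>x\<in>#U mu. \<forall>j\<in>{1..l}. x \<in># V j \<longrightarrow> j = c"
    proof (rule group.atom_within_one_block[OF assms(1)])
      show "U mu \<in> atoms G" using assms(5) mu(1) by blast
      show "\<forall>x\<in>#U mu. \<exists>j\<in>{1..l}. x \<in># V j"
      proof
        fix x assume "x \<in># U mu"
        then have "x \<in># (\<Sum>i\<in>{1..k}. U i)" using mu(1) by (auto simp: set_mset_sum)
        then have "x \<in># (\<Sum>j\<in>{1..l}. V j)" using assms(7) by simp
        then show "\<exists>j\<in>{1..l}. x \<in># V j" by (simp add: set_mset_sum)
      qed
      fix gs a b
      assume "2 \<le> length gs" "mset gs = U mu" "list_prod G gs = \<one>" "a \<in> {1..l}" "b \<in> {1..l}"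
        "gs ! 0 \<in># V a" "gs ! 1 \<in># V b"
      then show "a = b" using no_split mu(1) by blast
    qed (rule mu(2))
  qed
  then have "card {1..l} \<le> card {1..k}"
    by (intro group.card_le_if_atoms_within_blocks[OF assms(1) _ _ assms(5-7)]) simp_all
  with assms(4) show False by simp
qed

end
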